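(* Let $G=(V,E)$ be a finite connected graph and $W\subseteq V$ nonempty. Let $\ell\ge1$ be an integer and $\gamma=(\gamma_0,\dots,\gamma_\ell)$ a simple path in $G$ with $v=\gamma_0$, $\gamma_0,\dots,\gamma_{\ell-1}\notin W$ and $\gamma_\ell=u\in W$. Let $X$ be a lazy random walk started at $v$. Then $$\mathbb E\left[\tau_u\ \middle|\ \mathsf{LE}(X[0,\tau_W])=\gamma,\ \tau_u=\tau_W\right]\le \ell\cdot\mathcal B_W(G).$$
   Context: The lazy random walk $(X_t)$ on $G$ at each step stays put with probability $1/2$ and otherwise moves along a uniformly chosen edge incident to the current vertex. For nonempty $U\subseteq V$, $\tau_U=\min\{t\ge0:X_t\in U\}$, $\tau_u=\tau_{\{u\}}$. For nonempty $W\subseteq V$, $\mathbf p_W^t(u,v)=\Pr(X_t=v\text{ and }\{X_0,\dots,X_t\}\cap W=\varnothing\mid X_0=u)$, and the $W$-bubble sum is $\mathcal B_W(G)=\sum_{t=0}^\infty(t+1)\sup_{v\in V}\mathbf p_W^t(v,v)$ (finite). For a walk $X=(X_0,\dots,X_L)$, $X[0,L]$ denotes the walk itself and its loop-erasure $\mathsf{LE}(X)$ is defined by $\mathsf{LE}(X)_0=X_0$ and, given $\mathsf{LE}(X)_{j-1}$, letting $i=\max\{t:X_t=\mathsf{LE}(X)_{j-1}\}$: if $i<L$ set $\mathsf{LE}(X)_j=X_{i+1}$, otherwise stop. *)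

theory Defs
  imports "HOL-Analysis.Analysis"
begin

definition simple_graph :: "'a set \<Rightarrow> ('a \<Rightarrow> 'a \<Rightarrow> bool) \<Rightarrow> bool" where
  "simple_graph V E \<longleftrightarrow> finite V \<and> (\<forall>x y. E x y \<longrightarrow> x \<in> V \<and> y \<in> V)
     \<and> (\<forall>x y. E x y \<longrightarrow> E y x) \<and> (\<forall>x. \<not> E x x)"

definition graph_connected :: "'a set \<Rightarrow> ('a \<Rightarrow> 'a \<Rightarrow> bool) \<Rightarrow> bool" where
  "graph_connected V E \<longleftrightarrow> (\<forall>x\<in>V. \<forall>y\<in>V. E\<^sup>*\<^sup>* x y)"

definition deg :: "'a set \<Rightarrow> ('a \<Rightarrow> 'a \<Rightarrow> bool) \<Rightarrow> 'a \<Rightarrow> nat" where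
  "deg V E x = card {y\<in>V. E x y}"

definition lazy_P :: "'a set \<Rightarrow> ('a \<Rightarrow> 'a \<Rightarrow> bool) \<Rightarrow> 'a \<Rightarrow> 'a \<Rightarrow> real" where
  "lazy_P V E x y = (if x = y then 1/2 else 0) + (if E x y then 1 / (2 * real (deg V E x)) else 0)"

definition path_prob :: "'a set \<Rightarrow> ('a \<Rightarrow> 'a \<Rightarrow> bool) \<Rightarrow> 'a list \<Rightarrow> ennreal" where
  "path_prob V E w = (\<Prod>i<length w - 1. ennreal (lazy_P V E (w ! i) (w ! Suc i)))"

definition killed_p :: "'a set \<Rightarrow> ('a \<Rightarrow> 'a \<Rightarrow> bool) \<Rightarrow> 'a set \<Rightarrow> nat \<Rightarrow> 'a \<Rightarrow> 'a \<Rightarrow> ennreal" where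
  "killed_p V E W t a b = (\<Sum>w\<in>{w. length w = Suc t \<and> set w \<subseteq> V \<and> w ! 0 = a \<and> w ! t = b
        \<and> set w \<inter> W = {}}. path_prob V E w)"

definition bubble_sum :: "'a set \<Rightarrow> ('a \<Rightarrow> 'a \<Rightarrow> bool) \<Rightarrow> 'a set \<Rightarrow> ennreal" where
  "bubble_sum V E W = (\<Sum>t. of_nat (t + 1) * (SUP x\<in>V. killed_p V E W t x x))"

definition last_idx :: "'a \<Rightarrow> 'a list \<Rightarrow> nat" where
  "last_idx x ys = Max {t. t < length ys \<and> ys ! t = x}"

function loop_erase :: "'a list \<Rightarrow> 'a list" where
  "loop_erase [] = []"
| "loop_erase (x # xs) = x # loop_erase (drop (last_idx x (x # xs)) xs)"
  by pat_completeness auto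
termination by (relation "Wellfounded.measure length") auto

definition event_paths :: "'a set \<Rightarrow> 'a set \<Rightarrow> 'a \<Rightarrow> 'a \<Rightarrow> 'a list \<Rightarrow> nat \<Rightarrow> 'a list set" where
  "event_paths V W v u \<gamma> T = {w. length w = Suc T \<and> set w \<subseteq> V \<and> w ! 0 = v
      \<and> (\<forall>i<T. w ! i \<notin> W) \<and> w ! T = u \<and> loop_erase w = \<gamma>}"

definition event_prob :: "'a set \<Rightarrow> ('a \<Rightarrow> 'a \<Rightarrow> bool) \<Rightarrow> 'a set \<Rightarrow> 'a \<Rightarrow> 'a \<Rightarrow> 'a list \<Rightarrow> ennreal" where
  "event_prob V E W v u \<gamma> = (\<Sum>T. \<Sum>w\<in>event_paths V W v u \<gamma> T. path_prob V E w)"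

definition event_time :: "'a set \<Rightarrow> ('a \<Rightarrow> 'a \<Rightarrow> bool) \<Rightarrow> 'a set \<Rightarrow> 'a \<Rightarrow> 'a \<Rightarrow> 'a list \<Rightarrow> ennreal" where
  "event_time V E W v u \<gamma> = (\<Sum>T. of_nat T * (\<Sum>w\<in>event_paths V W v u \<gamma> T. path_prob V E w))"

text \<open>Conditional expectation E[tau_u | LE(X[0,tau_W]) = gamma, tau_u = tau_W] for the walk from v.\<close>
definition cond_exp_hit :: "'a set \<Rightarrow> ('a \<Rightarrow> 'a \<Rightarrow> bool) \<Rightarrow> 'a set \<Rightarrow> 'a \<Rightarrow> 'a \<Rightarrow> 'a list \<Rightarrow> ennreal" where
  "cond_exp_hit V E W v u \<gamma> = event_time V E W v u \<gamma> / event_prob V E W v u \<gamma>"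

end

theory Submission imports Defs begin

text \<open>
Cut a walk whose loop erasure is x # \<gamma> at its last visit to x. The first piece is a closed
walk at x that avoids W; the rest starts with a step to the second vertex of \<gamma>, never returns
to x, and is a walk with loop erasure \<gamma> stopped on first hitting W. So the event for x # \<gamma>
and W factorises into the killed Green's function at x, one transition probability, and the event
for \<gamma> and insert x W, while the hitting time is the sum of the two durations. The excursion at x
has expected length at most the bubble sum (killing on a larger set only lowers return
probabilities), so induction along \<gamma> costs at most \<B>_W(G) per edge.
\<close>

lemma sum_antidiagonal_reindex:
  fixes h :: "nat \<Rightarrow> nat \<Rightarrow> 'b::comm_monoid_add"
  shows "(\<Sum>T<N. \<Sum>a<T. h a (T - Suc a))
    = (\<Sum>p\<in>(\<lambda>(T,a). (a, T - Suc a)) ` (SIGMA T:{..<N}. {..<T}). h (fst p) (snd p))"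
proof -
  have "inj_on (\<lambda>(T,a). (a, T - Suc a)) (SIGMA T:{..<N}. {..<T})"
    by (auto simp: inj_on_def)
  then show ?thesis
    by (simp only: sum.reindex) (simp add: sum.Sigma case_prod_beta)
qed

lemma suminf_antidiagonal_ennreal:
  fixes h :: "nat \<Rightarrow> nat \<Rightarrow> ennreal"
  shows "(\<Sum>T. \<Sum>a<T. h a (T - Suc a)) = (\<Sum>a. \<Sum>b. h a b)"
proof (rule antisym)
  show "(\<Sum>T. \<Sum>a<T. h a (T - Suc a)) \<le> (\<Sum>a. \<Sum>b. h a b)"
  proof (rule suminf_le_const[OF summableI])
    fix N
    have "(\<Sum>T<N. \<Sum>a<T. h a (T - Suc a)) \<le> (\<Sum>p\<in>{..<N}\<times>{..<N}. h (fst p) (snd p))"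
      unfolding sum_antidiagonal_reindex by (rule sum_mono2) auto
    also have "\<dots> = (\<Sum>a<N. \<Sum>b<N. h a b)"
      by (simp add: sum.cartesian_product case_prod_beta)
    also have "\<dots> \<le> (\<Sum>a<N. \<Sum>b. h a b)" by (intro sum_mono sum_le_suminf) auto
    also have "\<dots> \<le> (\<Sum>a. \<Sum>b. h a b)" by (intro sum_le_suminf) auto
    finally show "(\<Sum>T<N. \<Sum>a<T. h a (T - Suc a)) \<le> (\<Sum>a. \<Sum>b. h a b)" .
  qed
next
  show "(\<Sum>a. \<Sum>b. h a b) \<le> (\<Sum>T. \<Sum>a<T. h a (T - Suc a))"
  proof (rule suminf_le_const[OF summableI])
    fix A
    have "(\<Sum>a<A. \<Sum>b. h a b) = (\<Sum>b. \<Sum>a<A. h a b)" by (rule suminf_sum[symmetric]) auto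
    also have "\<dots> \<le> (\<Sum>T. \<Sum>a<T. h a (T - Suc a))"
    proof (rule suminf_le_const[OF summableI])
      fix B
      have "p \<in> (\<lambda>(T, a). (a, T - Suc a)) ` (SIGMA T:{..<A + B}. {..<T})"
        if "p \<in> {..<A} \<times> {..<B}" for p
        using that by (intro image_eqI[where x="(fst p + snd p + 1, fst p)"]) auto
      then have "(\<Sum>p\<in>{..<A} \<times> {..<B}. h (fst p) (snd p)) \<le> (\<Sum>T<A+B. \<Sum>a<T. h a (T - Suc a))"
        unfolding sum_antidiagonal_reindex by (intro sum_mono2) auto
      then have "(\<Sum>b<B. \<Sum>a<A. h a b) \<le> (\<Sum>T<A+B. \<Sum>a<T. h a (T - Suc a))"
        by (subst sum.swap) (simp add: sum.cartesian_product case_prod_beta)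
      also have "\<dots> \<le> (\<Sum>T. \<Sum>a<T. h a (T - Suc a))" by (intro sum_le_suminf) auto
      finally show "(\<Sum>b<B. \<Sum>a<A. h a b) \<le> (\<Sum>T. \<Sum>a<T. h a (T - Suc a))" .
    qed
    finally show "(\<Sum>a<A. \<Sum>b. h a b) \<le> (\<Sum>T. \<Sum>a<T. h a (T - Suc a))" .
  qed
qed

lemma suminf_convolution_ennreal:
  fixes f g :: "nat \<Rightarrow> ennreal"
  shows "(\<Sum>T. \<Sum>a<T. f a * g (T - Suc a)) = (\<Sum>a. f a) * (\<Sum>b. g b)"
  using suminf_antidiagonal_ennreal[of "\<lambda>a b. f a * g b"] by simp

lemma suminf_convolution_moment_ennreal:
  fixes f g :: "nat \<Rightarrow> ennreal"
  shows "(\<Sum>T. of_nat T * (\<Sum>a<T. f a * g (T - Suc a)))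
    = (\<Sum>a. of_nat (a + 1) * f a) * (\<Sum>b. g b) + (\<Sum>a. f a) * (\<Sum>b. of_nat b * g b)"
proof -
  have "(\<Sum>T. of_nat T * (\<Sum>a<T. f a * g (T - Suc a)))
      = (\<Sum>T. \<Sum>a<T. of_nat (Suc a + (T - Suc a)) * (f a * g (T - Suc a)))"
    by (intro suminf_cong) (simp add: sum_distrib_left)
  also have "\<dots> = (\<Sum>a. \<Sum>b. of_nat (Suc a + b) * (f a * g b))"
    by (rule suminf_antidiagonal_ennreal)
  also have "\<dots> = (\<Sum>a. \<Sum>b. of_nat (a + 1) * f a * g b + f a * (of_nat b * g b))"
    by (intro suminf_cong) (simp add: algebra_simps)
  also have "\<dots> = (\<Sum>a. of_nat (a + 1) * f a) * (\<Sum>b. g b) + (\<Sum>a. f a) * (\<Sum>b. of_nat b * g b)"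
    by (simp add: suminf_add[symmetric])
  finally show ?thesis .
qed

lemma path_prob_singleton [simp]: "path_prob V E [x] = 1"
  by (simp add: path_prob_def)

lemma path_prob_Cons_Cons:
  "path_prob V E (x # y # zs) = ennreal (lazy_P V E x y) * path_prob V E (y # zs)"
  unfolding path_prob_def by (simp add: prod.lessThan_Suc_shift del: prod.lessThan_Suc)

lemma path_prob_append:
  assumes "xs \<noteq> []" "ys \<noteq> []"
  shows "path_prob V E (xs @ ys)
    = path_prob V E xs * ennreal (lazy_P V E (last xs) (hd ys)) * path_prob V E ys"
  using assms(1)
proof (induction xs rule: induct_list012)
  case (2 x)
  then show ?case using assms(2) by (cases ys) (simp_all add: path_prob_Cons_Cons)
next
  case (3 x y zs)
  then show ?case by (simp add: path_prob_Cons_Cons mult.assoc)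
qed simp

lemma last_idx:
  assumes "x \<in> set w"
  shows "last_idx x w < length w" "w ! last_idx x w = x"
    "\<And>t. last_idx x w < t \<Longrightarrow> t < length w \<Longrightarrow> w ! t \<noteq> x"
proof -
  let ?S = "{t. t < length w \<and> w ! t = x}"
  have "?S \<noteq> {}" using assms by (auto simp: in_set_conv_nth)
  then have "last_idx x w \<in> ?S" unfolding last_idx_def by (intro Max_in) auto
  then show "last_idx x w < length w" "w ! last_idx x w = x" by auto
  show "w ! t \<noteq> x" if "last_idx x w < t" "t < length w" for t
  proof
    assume "w ! t = x"
    then have "t \<le> last_idx x w" unfolding last_idx_def using that(2) by (intro Max_ge) auto
    then show False using that(1) by simp
  qed
qed

lemma last_idx_append:
  assumes "length L = Suc a" "L ! a = x" "x \<notin> set w"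
  shows "last_idx x (L @ w) = a"
  unfolding last_idx_def
proof (rule Max_eqI)
  fix t assume t: "t \<in> {t. t < length (L @ w) \<and> (L @ w) ! t = x}"
  show "t \<le> a"
  proof (rule ccontr)
    assume "\<not> t \<le> a"
    then have "w ! (t - Suc a) = x" "t - Suc a < length w"
      using assms(1) t by (auto simp: nth_append)
    then show False using assms(3) nth_mem by metis
  qed
qed (use assms in \<open>auto simp: nth_append\<close>)

lemma loop_erase_eq_Nil_iff [simp]: "loop_erase w = [] \<longleftrightarrow> w = []"
  by (cases w) auto

lemma hd_loop_erase: "w \<noteq> [] \<Longrightarrow> hd (loop_erase w) = hd w"
  by (cases w) auto

definition closed_walks :: "'a set \<Rightarrow> 'a set \<Rightarrow> 'a \<Rightarrow> nat \<Rightarrow> 'a list set" where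
  "closed_walks V W x a =
     {w. length w = Suc a \<and> set w \<subseteq> V \<and> w ! 0 = x \<and> w ! a = x \<and> set w \<inter> W = {}}"

lemma killed_p_diag: "killed_p V E W a x x = (\<Sum>w\<in>closed_walks V W x a. path_prob V E w)"
  unfolding killed_p_def closed_walks_def ..

lemma finite_closed_walks: "finite V \<Longrightarrow> finite (closed_walks V W x a)"
  by (rule finite_subset[OF _ finite_lists_length_eq[of V "Suc a"]]) (auto simp: closed_walks_def)

lemma killed_p_0_diag:
  assumes "x \<in> V" "x \<notin> W"
  shows "killed_p V E W 0 x x = 1"
proof -
  have "closed_walks V W x 0 = {[x]}"
    using assms by (auto simp: closed_walks_def length_Suc_conv)
  then show ?thesis by (simp add: killed_p_diag)
qed

lemma killed_p_diag_antimono: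
  assumes "finite V" "W' \<subseteq> W"
  shows "killed_p V E W a x x \<le> killed_p V E W' a x x"
  unfolding killed_p_diag
  by (rule sum_mono2[OF finite_closed_walks[OF assms(1)]])
    (use assms(2) in \<open>auto simp: closed_walks_def\<close>)

lemma finite_event_paths: "finite V \<Longrightarrow> finite (event_paths V W v u \<gamma> T)"
  by (rule finite_subset[OF _ finite_lists_length_eq[of V "Suc T"]]) (auto simp: event_paths_def)

lemma event_paths_avoid:
  assumes "w \<in> event_paths V W v u \<gamma> T" "x \<in> W" "x \<noteq> u"
  shows "x \<notin> set w"
proof
  assume "x \<in> set w"
  then obtain i where "i < length w" "w ! i = x" by (metis in_set_conv_nth)
  with assms show False
    by (cases "i < T") (auto simp: event_paths_def less_Suc_eq)
qed

lemma append_in_event_paths: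
  assumes dist: "distinct (x # \<gamma>)" and "\<gamma> \<noteq> []" "last \<gamma> = u" "a < T"
    and L: "L \<in> closed_walks V W x a"
    and w: "w \<in> event_paths V (insert x W) (hd \<gamma>) u \<gamma> (T - Suc a)"
  shows "L @ w \<in> event_paths V W x u (x # \<gamma>) T"
proof -
  have L_props: "length L = Suc a" "set L \<subseteq> V" "L ! 0 = x" "L ! a = x" "set L \<inter> W = {}"
    using L by (auto simp: closed_walks_def)
  have w_props: "length w = Suc (T - Suc a)" "set w \<subseteq> V" "w ! 0 = hd \<gamma>"
    "\<forall>i<T - Suc a. w ! i \<notin> insert x W" "w ! (T - Suc a) = u" "loop_erase w = \<gamma>"
    using w by (auto simp: event_paths_def)
  have "u \<noteq> x" using assms(1-3) by (metis distinct.simps(2) last_in_set)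
  then have x_notin_w: "x \<notin> set w" using event_paths_avoid[OF w] by blast
  have L_eq: "L = x # tl L" using L_props(1,3) by (cases L) auto
  have "loop_erase (L @ w) = x # loop_erase (drop (last_idx x (L @ w)) (tl L @ w))"
    using L_eq by (metis append_Cons loop_erase.simps(2))
  also have "last_idx x (L @ w) = a" using last_idx_append[OF L_props(1,4) x_notin_w] .
  finally have "loop_erase (L @ w) = x # \<gamma>" using L_props(1) w_props(6) by simp
  moreover have "(L @ w) ! i \<notin> W" if "i < T" for i
  proof (cases "i < Suc a")
    case True
    then have "(L @ w) ! i \<in> set L" using L_props(1) by (simp add: nth_append)
    then show ?thesis using L_props(5) by blast
  qed (use L_props(1) w_props(4) that in \<open>auto simp: nth_append\<close>)
  ultimately show ?thesis
    using L_props w_props \<open>a < T\<close> by (auto simp: event_paths_def nth_append)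
qed

lemma event_paths_split_last_visit:
  assumes "\<gamma> \<noteq> []" and w: "w \<in> event_paths V W x u (x # \<gamma>) T"
  defines "k \<equiv> last_idx x w"
  shows "k < T" "take (Suc k) w \<in> closed_walks V W x k"
    "drop (Suc k) w \<in> event_paths V (insert x W) (hd \<gamma>) u \<gamma> (T - Suc k)"
proof -
  have w_props: "length w = Suc T" "set w \<subseteq> V" "w ! 0 = x" "\<forall>i<T. w ! i \<notin> W"
    "w ! T = u" "loop_erase w = x # \<gamma>"
    using w by (auto simp: event_paths_def)
  have w_eq: "w = x # tl w" using w_props(1,3) by (cases w) auto
  then have "x \<in> set w" by (metis list.set_intros(1))
  note k = last_idx[OF this, folded k_def]
  have "loop_erase w = x # loop_erase (drop k (tl w))"
    using w_eq unfolding k_def by (metis loop_erase.simps(2))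
  then have erase: "loop_erase (drop (Suc k) w) = \<gamma>" using w_props(6) by (simp add: drop_Suc)
  then have ne: "drop (Suc k) w \<noteq> []" using assms(1) by auto
  then show "k < T" using w_props(1) by simp
  have "set (take (Suc k) w) \<inter> W = {}"
    using w_props(4) \<open>k < T\<close> by (auto simp: in_set_conv_nth)
  then show "take (Suc k) w \<in> closed_walks V W x k"
    using k(1,2) w_props(2,3) \<open>k < T\<close> by (auto simp: closed_walks_def dest: in_set_takeD)
  have "drop (Suc k) w ! 0 = hd \<gamma>"
    using hd_loop_erase[OF ne] erase ne by (simp add: hd_conv_nth)
  moreover have "drop (Suc k) w ! i \<notin> insert x W" if "i < T - Suc k" for i
    using k(3)[of "Suc k + i"] w_props(1,4) that by simp
  ultimately show "drop (Suc k) w \<in> event_paths V (insert x W) (hd \<gamma>) u \<gamma> (T - Suc k)"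
    using w_props(1,2,5) \<open>k < T\<close> erase by (auto simp: event_paths_def dest: in_set_dropD)
qed

definition last_exit_pieces ::
  "'a set \<Rightarrow> 'a set \<Rightarrow> 'a \<Rightarrow> 'a \<Rightarrow> 'a list \<Rightarrow> nat \<Rightarrow> (nat \<times> 'a list \<times> 'a list) set" where
  "last_exit_pieces V W x u \<gamma> T =
     (SIGMA a:{..<T}. closed_walks V W x a \<times> event_paths V (insert x W) (hd \<gamma>) u \<gamma> (T - Suc a))"

lemma event_paths_Cons_eq_image:
  assumes "distinct (x # \<gamma>)" "\<gamma> \<noteq> []" "last \<gamma> = u"
  shows "event_paths V W x u (x # \<gamma>) T = (\<lambda>(a, L, w). L @ w) ` last_exit_pieces V W x u \<gamma> T"
  unfolding last_exit_pieces_def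
proof (intro equalityI subsetI)
  fix w assume "w \<in> event_paths V W x u (x # \<gamma>) T"
  note split = event_paths_split_last_visit[OF assms(2) this]
  show "w \<in> (\<lambda>(a, L, w). L @ w) `
    (SIGMA a:{..<T}. closed_walks V W x a \<times> event_paths V (insert x W) (hd \<gamma>) u \<gamma> (T - Suc a))"
    by (rule image_eqI[of _ _ "(last_idx x w, take (Suc (last_idx x w)) w, drop (Suc (last_idx x w)) w)"])
      (use split in auto)
qed (use append_in_event_paths[OF assms] in auto)

lemma inj_on_append_last_visit:
  assumes "distinct (x # \<gamma>)" "\<gamma> \<noteq> []" "last \<gamma> = u"
  shows "inj_on (\<lambda>(a, L, w). L @ w) (last_exit_pieces V W x u \<gamma> T)"
proof (rule inj_onI)
  have "u \<noteq> x" using assms by (metis distinct.simps(2) last_in_set)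
  then have split_at: "last_idx x (L @ w) = a"
    if "L \<in> closed_walks V W x a" "w \<in> event_paths V (insert x W) (hd \<gamma>) u \<gamma> b" for L w a b
    using that event_paths_avoid[OF that(2)]
    by (intro last_idx_append) (auto simp: closed_walks_def)
  fix p q assume p: "p \<in> last_exit_pieces V W x u \<gamma> T" and q: "q \<in> last_exit_pieces V W x u \<gamma> T"
    and eq: "(\<lambda>(a, L, w). L @ w) p = (\<lambda>(a, L, w). L @ w) q"
  obtain a L w where p_eq: "p = (a, L, w)" by (cases p) auto
  obtain b M z where q_eq: "q = (b, M, z)" by (cases q) auto
  have L: "L \<in> closed_walks V W x a" and w: "w \<in> event_paths V (insert x W) (hd \<gamma>) u \<gamma> (T - Suc a)"
    using p p_eq by (auto simp: last_exit_pieces_def)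
  have M: "M \<in> closed_walks V W x b" and z: "z \<in> event_paths V (insert x W) (hd \<gamma>) u \<gamma> (T - Suc b)"
    using q q_eq by (auto simp: last_exit_pieces_def)
  have LM: "L @ w = M @ z" using eq p_eq q_eq by simp
  have "a = b" using split_at[OF L w] split_at[OF M z] LM by simp
  moreover have "length L = length M" using L M \<open>a = b\<close> by (simp add: closed_walks_def)
  ultimately show "p = q" using LM p_eq q_eq by simp
qed

definition erased_hit_prob ::
  "'a set \<Rightarrow> ('a \<Rightarrow> 'a \<Rightarrow> bool) \<Rightarrow> 'a set \<Rightarrow> 'a list \<Rightarrow> nat \<Rightarrow> ennreal" where
  "erased_hit_prob V E W \<gamma> T = (\<Sum>w\<in>event_paths V W (hd \<gamma>) (last \<gamma>) \<gamma> T. path_prob V E w)"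

lemma erased_hit_prob_Cons:
  assumes "finite V" "distinct (x # \<gamma>)" "\<gamma> \<noteq> []"
  shows "erased_hit_prob V E W (x # \<gamma>) T = (\<Sum>a<T. killed_p V E W a x x
    * ennreal (lazy_P V E x (hd \<gamma>)) * erased_hit_prob V E (insert x W) \<gamma> (T - Suc a))"
proof -
  let ?D = "\<lambda>a. closed_walks V W x a \<times> event_paths V (insert x W) (hd \<gamma>) (last \<gamma>) \<gamma> (T - Suc a)"
  let ?c = "ennreal (lazy_P V E x (hd \<gamma>))"
  have "erased_hit_prob V E W (x # \<gamma>) T
      = (\<Sum>w\<in>(\<lambda>(a, L, w). L @ w) ` last_exit_pieces V W x (last \<gamma>) \<gamma> T. path_prob V E w)"
    unfolding erased_hit_prob_def using assms(2,3) by (simp add: event_paths_Cons_eq_image)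
  also have "\<dots> = (\<Sum>(a, L, w)\<in>last_exit_pieces V W x (last \<gamma>) \<gamma> T. path_prob V E (L @ w))"
    by (rule sum.reindex_cong[OF inj_on_append_last_visit[OF assms(2,3) refl] refl]) auto
  also have "\<dots> = (\<Sum>a<T. \<Sum>(L, w)\<in>?D a. path_prob V E (L @ w))"
    unfolding last_exit_pieces_def using assms(1)
    by (intro sum.Sigma[symmetric] ballI finite_cartesian_product finite_closed_walks
        finite_event_paths) auto
  also have "\<dots> = (\<Sum>a<T. \<Sum>(L, w)\<in>?D a. path_prob V E L * ?c * path_prob V E w)"
  proof (intro sum.cong refl, clarsimp)
    fix a L w assume "L \<in> closed_walks V W x a"
      "w \<in> event_paths V (insert x W) (hd \<gamma>) (last \<gamma>) \<gamma> (T - Suc a)"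
    then have "length L = Suc a" "L ! a = x" "w \<noteq> []" "w ! 0 = hd \<gamma>"
      by (auto simp: closed_walks_def event_paths_def)
    then have "L \<noteq> []" by auto
    then have "last L = x" "hd w = hd \<gamma>"
      using \<open>length L = Suc a\<close> \<open>L ! a = x\<close> \<open>w \<noteq> []\<close> \<open>w ! 0 = hd \<gamma>\<close>
      by (simp_all add: last_conv_nth hd_conv_nth)
    then show "path_prob V E (L @ w) = path_prob V E L * ?c * path_prob V E w"
      using \<open>L \<noteq> []\<close> \<open>w \<noteq> []\<close> by (simp add: path_prob_append)
  qed
  also have "\<dots> = (\<Sum>a<T. killed_p V E W a x x * ?c * erased_hit_prob V E (insert x W) \<gamma> (T - Suc a))"
    unfolding killed_p_diag erased_hit_prob_def
    by (intro sum.cong refl)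
      (simp only: sum.cartesian_product[symmetric] sum_distrib_left sum_distrib_right
        case_prod_conv, rule sum.swap)
  finally show ?thesis using assms(3) by simp
qed

lemma killed_time_le_bubble_sum:
  assumes "finite V" "x \<in> V" "x \<notin> W" "W' \<subseteq> W"
  shows "(\<Sum>a. of_nat (a + 1) * killed_p V E W a x x)
    \<le> bubble_sum V E W' * (\<Sum>a. killed_p V E W a x x)"
proof -
  have "killed_p V E W a x x \<le> (SUP y\<in>V. killed_p V E W' a y y)" for a
    using killed_p_diag_antimono[OF assms(1,4)] SUP_upper[OF assms(2)] by (rule order_trans)
  then have "(\<Sum>a. of_nat (a + 1) * killed_p V E W a x x) \<le> bubble_sum V E W'"
    unfolding bubble_sum_def by (intro suminf_le mult_left_mono) auto
  also have "\<dots> \<le> bubble_sum V E W' * (\<Sum>a. killed_p V E W a x x)"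
  proof -
    have "1 \<le> (\<Sum>a<1. killed_p V E W a x x)" using killed_p_0_diag[OF assms(2,3)] by simp
    also have "\<dots> \<le> (\<Sum>a. killed_p V E W a x x)" by (rule sum_le_suminf) auto
    finally show ?thesis using mult_left_mono[of 1 _ "bubble_sum V E W'"] by simp
  qed
  finally show ?thesis .
qed

lemma erased_hit_time_le:
  assumes "finite V" "distinct \<gamma>" "\<gamma> \<noteq> []" "set \<gamma> \<subseteq> V" "last \<gamma> \<in> W"
    "\<forall>y\<in>set (butlast \<gamma>). y \<notin> W" "W' \<subseteq> W"
  shows "(\<Sum>T. of_nat T * erased_hit_prob V E W \<gamma> T)
    \<le> of_nat (length \<gamma> - 1) * bubble_sum V E W' * (\<Sum>T. erased_hit_prob V E W \<gamma> T)"
  using assms(2-)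
proof (induction \<gamma> arbitrary: W rule: induct_list012)
  case (2 x)
  then have "event_paths V W x x [x] T = {}" if "T > 0" for T
    using that by (auto simp: event_paths_def)
  then have "of_nat T * erased_hit_prob V E W [x] T = 0" for T
    by (cases T) (auto simp: erased_hit_prob_def)
  then have "(\<lambda>T. of_nat T * erased_hit_prob V E W [x] T) = (\<lambda>_. 0)" by (rule ext)
  then show ?case by simp
next
  case (3 x y zs)
  define k where "k a = killed_p V E W a x x * ennreal (lazy_P V E x y)" for a
  define p where "p = erased_hit_prob V E (insert x W) (y # zs)"
  have x: "x \<in> V" "x \<notin> W" using "3.prems" by auto
  have IH: "(\<Sum>b. of_nat b * p b) \<le> of_nat (length zs) * bubble_sum V E W' * (\<Sum>b. p b)"
    unfolding p_def using "3.prems" by (intro "3.IH"[simplified]) (auto dest: in_set_butlastD)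
  have step: "erased_hit_prob V E W (x # y # zs) T = (\<Sum>a<T. k a * p (T - Suc a))" for T
    unfolding k_def p_def using erased_hit_prob_Cons[OF assms(1) "3.prems"(1)] by simp
  have loop: "(\<Sum>a. of_nat (a + 1) * k a) \<le> bubble_sum V E W' * (\<Sum>a. k a)"
    using killed_time_le_bubble_sum[OF assms(1) x, of W' E] "3.prems"(6)
    unfolding k_def ennreal_suminf_multc mult.assoc[symmetric] by (auto intro: mult_right_mono)
  have "(\<Sum>T. of_nat T * erased_hit_prob V E W (x # y # zs) T)
      = (\<Sum>a. of_nat (a + 1) * k a) * (\<Sum>b. p b) + (\<Sum>a. k a) * (\<Sum>b. of_nat b * p b)"
    unfolding step by (rule suminf_convolution_moment_ennreal)
  also have "\<dots> \<le> bubble_sum V E W' * (\<Sum>a. k a) * (\<Sum>b. p b)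
        + (\<Sum>a. k a) * (of_nat (length zs) * bubble_sum V E W' * (\<Sum>b. p b))"
    using loop IH by (intro add_mono mult_right_mono mult_left_mono) auto
  also have "\<dots> = of_nat (length (x # y # zs) - 1) * bubble_sum V E W' * ((\<Sum>a. k a) * (\<Sum>b. p b))"
    by (simp add: algebra_simps)
  also have "(\<Sum>a. k a) * (\<Sum>b. p b) = (\<Sum>T. erased_hit_prob V E W (x # y # zs) T)"
    unfolding step by (rule suminf_convolution_ennreal[symmetric])
  finally show ?case .
qed simp

lemma set_path_subset:
  assumes "simple_graph V E" "l \<ge> 1" "length \<gamma> = l + 1" "\<forall>i<l. E (\<gamma> ! i) (\<gamma> ! Suc i)"
  shows "set \<gamma> \<subseteq> V"
proof -
  have "\<gamma> ! i \<in> V" if "i \<le> l" for i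
  proof (cases "i < l")
    case True
    then show ?thesis using assms(1,4) by (auto simp: simple_graph_def)
  next
    case False
    then have "l - 1 < l" "i = Suc (l - 1)" using that assms(2) by auto
    then show ?thesis using assms(1,4) unfolding simple_graph_def by metis
  qed
  then show ?thesis using assms(3) by (auto simp: in_set_conv_nth)
qed

lemma cond_exp_hit_le:
  assumes "event_time V E W v u \<gamma> \<le> c * event_prob V E W v u \<gamma>"
  shows "cond_exp_hit V E W v u \<gamma> \<le> c"
proof (cases "event_prob V E W v u \<gamma> = 0")
  case True
  then show ?thesis using assms by (simp add: cond_exp_hit_def)
next
  case False
  then show ?thesis unfolding cond_exp_hit_def using assms
    by (intro divide_le_posI_ennreal) (auto simp: mult.commute zero_less_iff_neq_zero)
qed

theorem mainTheorem12:
  fixes V W :: "'a set" and E :: "'a \<Rightarrow> 'a \<Rightarrow> bool" and \<gamma> :: "'a list"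
    and l :: nat and u v :: 'a
  assumes "simple_graph V E" and "graph_connected V E"
    and "W \<subseteq> V" and "W \<noteq> {}"
    and "l \<ge> 1" and "length \<gamma> = l + 1" and "distinct \<gamma>"
    and "\<forall>i<l. E (\<gamma> ! i) (\<gamma> ! Suc i)"
    and "v = \<gamma> ! 0" and "\<forall>i<l. \<gamma> ! i \<notin> W" and "\<gamma> ! l = u" and "u \<in> W"
  shows "cond_exp_hit V E W v u \<gamma> \<le> of_nat l * bubble_sum V E W"
proof (rule cond_exp_hit_le)
  have fin: "finite V" using assms(1) by (simp add: simple_graph_def)
  have ne: "\<gamma> \<noteq> []" using assms(6) by auto
  then have "hd \<gamma> = v" "last \<gamma> = u"
    using assms(6,9,11) by (simp_all add: hd_conv_nth last_conv_nth)
  moreover have "\<forall>y\<in>set (butlast \<gamma>). y \<notin> W"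
    using assms(6,10) by (auto simp: in_set_conv_nth nth_butlast)
  moreover note erased_hit_time_le[OF fin assms(7) ne set_path_subset[OF assms(1,5,6,8)], of W W E]
  ultimately show "event_time V E W v u \<gamma> \<le> of_nat l * bubble_sum V E W * event_prob V E W v u \<gamma>"
    using assms(6,12) unfolding event_time_def event_prob_def erased_hit_prob_def by simp
qed

end
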